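(* Let $A$ be a commutative ring and $\sigma$ a hereditary torsion theory on $A$-modules of finite type. The following are equivalent: (a) $A$ is totally $\sigma$-artinian; (b) $\mathcal{K}(\sigma)=\mathcal{C}(\sigma)$, this set is finite, and $A$ is totally $\sigma_{A\setminus\mathfrak{p}}$-artinian for every $\mathfrak{p}\in\mathcal{C}(\sigma)$.
   Context: $\mathcal{L}(\tau)$ denotes the Gabriel filter of a hereditary torsion theory $\tau$. $\sigma$ is of finite type if every ideal in $\mathcal{L}(\sigma)$ contains a finitely generated ideal in $\mathcal{L}(\sigma)$. $A$ is totally $\tau$-artinian if for every descending chain of ideals $\mathfrak{a}_1\supseteq\mathfrak{a}_2\supseteq\cdots$ there exist $m$ and $\mathfrak{h}\in\mathcal{L}(\tau)$ with $\mathfrak{a}_m\mathfrak{h}\subseteq\mathfrak{a}_s$ for all $s\ge m$. For a prime $\mathfrak{p}$, $\sigma_{A\setminus\mathfrak{p}}$ has Gabriel filter $\{\mathfrak{a}:\mathfrak{a}\not\subseteq\mathfrak{p}\}$. $\mathcal{K}(\sigma)$ is the set of primes $\mathfrak{p}$ with $\mathfrak{p}\notin\mathcal{L}(\sigma)$, and $\mathcal{C}(\sigma)$ is the set of maximal elements of $\mathcal{K}(\sigma)$. *)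

theory Defs
  imports "HOL-Algebra.Ideal_Product"
begin

text \<open>A hereditary torsion theory on A-modules is represented by its Gabriel filter
  (these correspond bijectively).  Gabriel filter of ideals of a commutative ring R.\<close>

definition colon_ideal :: "('a, 'b) ring_scheme \<Rightarrow> 'a set \<Rightarrow> 'a \<Rightarrow> 'a set" where
  "colon_ideal R J x = {y \<in> carrier R. y \<otimes>\<^bsub>R\<^esub> x \<in> J}"

definition gabriel_filter :: "('a, 'b) ring_scheme \<Rightarrow> 'a set set \<Rightarrow> bool" where
  "gabriel_filter R F \<longleftrightarrow>
     (\<forall>I\<in>F. ideal I R) \<and> carrier R \<in> F \<and>
     (\<forall>I\<in>F. \<forall>J. ideal J R \<and> I \<subseteq> J \<longrightarrow> J \<in> F) \<and>
     (\<forall>I\<in>F. \<forall>J\<in>F. I \<inter> J \<in> F) \<and>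
     (\<forall>I\<in>F. \<forall>x\<in>carrier R. colon_ideal R I x \<in> F) \<and>
     (\<forall>J. ideal J R \<and> (\<exists>I\<in>F. \<forall>x\<in>I. colon_ideal R J x \<in> F) \<longrightarrow> J \<in> F)"

definition finite_type :: "('a, 'b) ring_scheme \<Rightarrow> 'a set set \<Rightarrow> bool" where
  "finite_type R F \<longleftrightarrow>
     (\<forall>I\<in>F. \<exists>J\<in>F. J \<subseteq> I \<and> (\<exists>S. finite S \<and> S \<subseteq> carrier R \<and> J = Idl\<^bsub>R\<^esub> S))"

definition totally_artinian :: "('a, 'b) ring_scheme \<Rightarrow> 'a set set \<Rightarrow> bool" where
  "totally_artinian R F \<longleftrightarrow>
     (\<forall>a :: nat \<Rightarrow> 'a set. (\<forall>n. ideal (a n) R) \<and> (\<forall>n. a (Suc n) \<subseteq> a n) \<longrightarrow>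
        (\<exists>m. \<exists>h\<in>F. \<forall>s\<ge>m. a m \<cdot>\<^bsub>R\<^esub> h \<subseteq> a s))"

text \<open>Gabriel filter of sigma_{A \ p}.\<close>
definition loc_filter :: "('a, 'b) ring_scheme \<Rightarrow> 'a set \<Rightarrow> 'a set set" where
  "loc_filter R p = {I. ideal I R \<and> \<not> I \<subseteq> p}"

definition K_set :: "('a, 'b) ring_scheme \<Rightarrow> 'a set set \<Rightarrow> 'a set set" where
  "K_set R F = {p. primeideal p R \<and> p \<notin> F}"

definition C_set :: "('a, 'b) ring_scheme \<Rightarrow> 'a set set \<Rightarrow> 'a set set" where
  "C_set R F = {p \<in> K_set R F. \<forall>q\<in>K_set R F. p \<subseteq> q \<longrightarrow> q = p}"

end

theory Submission
  imports Defs "HOL-Algebra.Ring_Divisibility"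
begin

text \<open>For a Gabriel filter of finite type, Zorn's lemma yields, above any ideal outside the
  filter, an ideal maximal outside it, and such an ideal is prime because the filter is closed
  under products. Hence an ideal lies in the filter iff it lies in no prime of K(sigma).

  Let A be totally sigma-artinian. If p is prime, q in K(sigma), p a proper subset of q and
  x in q - p, the chain of ideals (x^n) gives x^m h contained in (x^(m+1)) for some h in the
  filter; cancelling x^m modulo p puts h inside q, which is impossible. So K(sigma) = C(sigma).
  For infinitely many distinct maximal primes p_i, the chain p_0 \<inter> ... \<inter> p_n gives
  p_0 \<inter> ... \<inter> p_m contained in p_(m+1), hence some p_i contained in p_(m+1). Finally the
  filter of sigma is contained in that of sigma_(A - p) for every p in K(sigma).

  Conversely, move the local witnesses h_p of a descending chain (a_n) to a common index m:
  the ideal of all y with a_m y contained in a_s for every s \<ge> m contains every h_p, so it lies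
  in no prime of the finite set K(sigma) and therefore belongs to the filter.\<close>

definition ideal_quotient :: "('a, 'b) ring_scheme \<Rightarrow> 'a set \<Rightarrow> 'a set \<Rightarrow> 'a set" where
  "ideal_quotient R J I = {y \<in> carrier R. \<forall>x\<in>I. y \<otimes>\<^bsub>R\<^esub> x \<in> J}"

lemma colon_ideal_eq_ideal_quotient: "colon_ideal R J x = ideal_quotient R J {x}"
  unfolding colon_ideal_def ideal_quotient_def by simp

lemma ideal_quotient_antimono: "I' \<subseteq> I \<Longrightarrow> ideal_quotient R J I \<subseteq> ideal_quotient R J I'"
  unfolding ideal_quotient_def by blast

lemma (in cring) ideal_quotient_ideal:
  assumes J: "ideal J R" and I: "I \<subseteq> carrier R"
  shows "ideal (ideal_quotient R J I) R"
proof -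
  interpret J: ideal J R by fact
  show ?thesis
  proof (rule idealI[OF ring_axioms])
    show "subgroup (ideal_quotient R J I) (add_monoid R)"
      by (rule subgroup.intro)
        (use I in \<open>auto simp: ideal_quotient_def l_distr l_minus subset_iff simp flip: a_inv_def\<close>)
  next
    fix a y assume a: "a \<in> ideal_quotient R J I" and y: "y \<in> carrier R"
    have "y \<otimes> a \<otimes> x \<in> J" if "x \<in> I" for x
      using a y that I by (auto simp: ideal_quotient_def m_assoc J.I_l_closed)
    then show "y \<otimes> a \<in> ideal_quotient R J I" "a \<otimes> y \<in> ideal_quotient R J I"
      using a y by (auto simp: ideal_quotient_def m_comm)
  qed
qed

lemma (in cring) colon_ideal_ideal: "ideal J R \<Longrightarrow> x \<in> carrier R \<Longrightarrow> ideal (colon_ideal R J x) R"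
  by (simp add: colon_ideal_eq_ideal_quotient ideal_quotient_ideal)

lemma (in cring) ideal_prod_subset_iff:
  assumes I: "ideal I R" and H: "ideal H R" and J: "ideal J R"
  shows "I \<cdot> H \<subseteq> J \<longleftrightarrow> H \<subseteq> ideal_quotient R J I"
proof
  assume "I \<cdot> H \<subseteq> J"
  then show "H \<subseteq> ideal_quotient R J I"
    using ideal_prod.prod[of _ I _ H R] I H
    by (force simp: ideal_quotient_def ideal.Icarr m_comm)
next
  assume HQ: "H \<subseteq> ideal_quotient R J I"
  show "I \<cdot> H \<subseteq> J"
  proof
    fix z assume "z \<in> I \<cdot> H"
    then show "z \<in> J"
    proof (induction z rule: ideal_prod.induct)
      case (prod i h)
      then show ?case
        using HQ I H by (auto simp: ideal_quotient_def ideal.Icarr m_comm)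
    next
      case (sum s1 s2)
      then show ?case using J by (simp add: additive_subgroup.a_closed ideal.axioms(1))
    qed
  qed
qed

lemma gabriel_filter_ideal: "gabriel_filter R F \<Longrightarrow> I \<in> F \<Longrightarrow> ideal I R"
  unfolding gabriel_filter_def by blast

lemma gabriel_filter_carrier: "gabriel_filter R F \<Longrightarrow> carrier R \<in> F"
  unfolding gabriel_filter_def by blast

lemma gabriel_filter_upward: "gabriel_filter R F \<Longrightarrow> I \<in> F \<Longrightarrow> ideal J R \<Longrightarrow> I \<subseteq> J \<Longrightarrow> J \<in> F"
  unfolding gabriel_filter_def by (elim conjE) blast

lemma gabriel_filter_memI_colon:
  "gabriel_filter R F \<Longrightarrow> ideal J R \<Longrightarrow> I \<in> F \<Longrightarrow> (\<And>x. x \<in> I \<Longrightarrow> colon_ideal R J x \<in> F) \<Longrightarrow> J \<in> F"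
  unfolding gabriel_filter_def by (elim conjE) blast

lemma gabriel_filter_not_subset_K: "gabriel_filter R F \<Longrightarrow> h \<in> F \<Longrightarrow> p \<in> K_set R F \<Longrightarrow> \<not> h \<subseteq> p"
  unfolding K_set_def by (metis gabriel_filter_upward mem_Collect_eq primeideal.axioms(1))

lemma (in cring) gabriel_filter_ideal_prod:
  assumes gf: "gabriel_filter R F" and I: "I \<in> F" and J: "J \<in> F"
  shows "I \<cdot> J \<in> F"
proof (rule gabriel_filter_memI_colon[OF gf _ I])
  have ideals: "ideal I R" "ideal J R" using gf I J by (auto intro: gabriel_filter_ideal)
  then show IJ: "ideal (I \<cdot> J) R" by (rule ideal_prod_is_ideal)
  fix x assume x: "x \<in> I"
  have "J \<subseteq> colon_ideal R (I \<cdot> J) x"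
    using ideals x ideal_prod.prod[OF x, of _ J R]
    by (auto simp: colon_ideal_def ideal.Icarr m_comm)
  then show "colon_ideal R (I \<cdot> J) x \<in> F"
    using gabriel_filter_upward[OF gf J] colon_ideal_ideal[OF IJ ideal.Icarr[OF ideals(1) x]] by blast
qed

lemma (in ring) Union_chain_notin_filter:
  assumes gf: "gabriel_filter R F" and ft: "finite_type R F"
    and C: "C \<noteq> {}" "subset.chain {J. ideal J R \<and> J \<notin> F} C"
  shows "\<Union>C \<notin> F"
proof
  assume "\<Union>C \<in> F"
  then obtain S where S: "Idl S \<in> F" "Idl S \<subseteq> \<Union>C" "finite S" "S \<subseteq> carrier R"
    using ft unfolding finite_type_def by blast
  then obtain X where X: "X \<in> C" "S \<subseteq> X"
    using finite_subset_Union_chain[OF S(3) _ C] genideal_self by blast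
  moreover have "ideal X R" "X \<notin> F" using C(2) X(1) unfolding subset_chain_def by auto
  ultimately show False
    using gabriel_filter_upward[OF gf S(1)] genideal_minimal by blast
qed

lemma (in ring) exists_maximal_non_filter_ideal:
  assumes gf: "gabriel_filter R F" and ft: "finite_type R F" and I: "ideal I R" "I \<notin> F"
  obtains p where "ideal p R" "I \<subseteq> p" "p \<notin> F" "\<And>J. ideal J R \<Longrightarrow> p \<subseteq> J \<Longrightarrow> J \<notin> F \<Longrightarrow> J = p"
proof -
  let ?A = "{J. ideal J R \<and> I \<subseteq> J \<and> J \<notin> F}"
  have "\<exists>p\<in>?A. \<forall>J\<in>?A. p \<subseteq> J \<longrightarrow> J = p"
  proof (rule subset_Zorn_nonempty)
    show "?A \<noteq> {}" using I by blast
  next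
    fix C assume C: "C \<noteq> {}" "subset.chain ?A C"
    then have ideals: "subset.chain {J. ideal J R} C"
      and non_filter: "subset.chain {J. ideal J R \<and> J \<notin> F} C"
      unfolding subset_chain_def by auto
    have "ideal (\<Union>C) R" using chain_Union_is_ideal[OF ideals] C(1) by simp
    moreover have "\<Union>C \<notin> F" using Union_chain_notin_filter[OF gf ft C(1) non_filter] .
    moreover obtain X where "X \<in> C" using C(1) by blast
    then have "I \<subseteq> \<Union>C" using C(2) unfolding subset_chain_def by blast
    ultimately show "\<Union>C \<in> ?A" by blast
  qed
  then obtain p where "p \<in> ?A" "\<forall>J\<in>?A. p \<subseteq> J \<longrightarrow> J = p" by blast
  then show thesis by (intro that) auto
qed

lemma (in ring) add_ideals_subset:
  fixes P A B :: "'a set"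
  assumes P: "ideal P R" and "A \<subseteq> P" "B \<subseteq> P"
  shows "A <+> B \<subseteq> P"
  using assms additive_subgroup.a_closed[OF ideal.axioms(1)[OF P]] unfolding set_add_def' by blast

lemma (in cring) ideal_prod_add_subset:
  assumes P: "ideal P R" and I: "ideal I R" and J: "ideal J R" and IJ: "I \<cdot> J \<subseteq> P"
  shows "(P <+> I) \<cdot> (P <+> J) \<subseteq> P"
proof -
  have PJ: "ideal (P <+> J) R" using P J by (rule add_ideals)
  have "(P <+> I) \<cdot> (P <+> J) = P \<cdot> (P <+> J) <+> (I \<cdot> P <+> I \<cdot> J)"
    using ideal_prod_distr(2)[OF PJ P I] ideal_prod_distr(1)[OF I P J] by simp
  also have "\<dots> \<subseteq> P"
    using ideal_prod_inter[OF P PJ] ideal_prod_inter[OF I P] IJ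
    by (intro add_ideals_subset[OF P]) auto
  finally show ?thesis .
qed

lemma (in cring) maximal_non_filter_ideal_prime:
  assumes gf: "gabriel_filter R F" and p: "ideal p R" "p \<notin> F"
    and max: "\<And>J. ideal J R \<Longrightarrow> p \<subseteq> J \<Longrightarrow> J \<notin> F \<Longrightarrow> J = p"
  shows "primeideal p R"
proof (rule divides_ideal_prod_imp_primeideal[OF p(1)])
  show "p \<noteq> carrier R" using gabriel_filter_carrier[OF gf] p(2) by auto
next
  have enlarge: "p <+> I \<in> F" if I: "ideal I R" "\<not> I \<subseteq> p" for I
  proof (rule ccontr)
    assume notin: "p <+> I \<notin> F"
    have "p \<union> I \<subseteq> carrier R" using ideal.Icarr[OF p(1)] ideal.Icarr[OF I(1)] by auto
    then have sub: "p \<union> I \<subseteq> p <+> I"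
      using genideal_self[of "p \<union> I"] union_genideal[OF p(1) I(1)] by argo
    then have "p <+> I = p" using max[OF add_ideals[OF p(1) I(1)] _ notin] by simp
    then show False using sub I(2) by simp
  qed
  fix I J assume I: "ideal I R" and J: "ideal J R" and IJ: "I \<cdot> J \<subseteq> p"
  show "I \<subseteq> p \<or> J \<subseteq> p"
  proof (rule ccontr)
    assume "\<not> (I \<subseteq> p \<or> J \<subseteq> p)"
    then have "(p <+> I) \<cdot> (p <+> J) \<in> F"
      using enlarge[OF I] enlarge[OF J] by (simp add: gabriel_filter_ideal_prod[OF gf])
    then have "p \<in> F"
      using gabriel_filter_upward[OF gf _ p(1) ideal_prod_add_subset[OF p(1) I J IJ]] by simp
    then show False using p(2) by simp
  qed
qed

lemma (in cring) gabriel_filter_mem_iff: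
  assumes gf: "gabriel_filter R F" and ft: "finite_type R F" and I: "ideal I R"
  shows "I \<in> F \<longleftrightarrow> (\<forall>p\<in>K_set R F. \<not> I \<subseteq> p)"
proof
  show "I \<in> F \<Longrightarrow> \<forall>p\<in>K_set R F. \<not> I \<subseteq> p"
    using gabriel_filter_not_subset_K[OF gf] by blast
next
  assume notin: "\<forall>p\<in>K_set R F. \<not> I \<subseteq> p"
  show "I \<in> F"
  proof (rule ccontr)
    assume "I \<notin> F"
    obtain p where p: "ideal p R" "I \<subseteq> p" "p \<notin> F"
      and max: "\<And>J. ideal J R \<Longrightarrow> p \<subseteq> J \<Longrightarrow> J \<notin> F \<Longrightarrow> J = p"
      using exists_maximal_non_filter_ideal[OF gf ft I \<open>I \<notin> F\<close>] by metis
    have "primeideal p R" by (rule maximal_non_filter_ideal_prime[OF gf p(1,3) max])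
    then have "p \<in> K_set R F" unfolding K_set_def using p(3) by blast
    then show False using notin p(2) by blast
  qed
qed

lemma (in cring) pow_notin_primeideal:
  assumes P: "primeideal P R" and x: "x \<in> carrier R" "x \<notin> P"
  shows "x [^] (n::nat) \<notin> P"
proof (induction n)
  case 0
  show ?case
    using ideal.one_imp_carrier[OF primeideal.axioms(1)[OF P]] primeideal.I_notcarr[OF P] by auto
next
  case (Suc n)
  then show ?case using primeideal.I_prime[OF P nat_pow_closed[OF x(1)] x(1)] x(2) by auto
qed

lemma (in cring) primeideal_Inter_subset:
  assumes P: "primeideal P R" and S: "finite S" "S \<noteq> {}" "\<And>I. I \<in> S \<Longrightarrow> ideal I R"
    and sub: "\<Inter>S \<subseteq> P"
  shows "\<exists>I\<in>S. I \<subseteq> P"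
  using S sub
proof (induction S rule: finite_ne_induct)
  case (singleton I)
  then show ?case by simp
next
  case (insert I S)
  have "ideal I R" "ideal (\<Inter>S) R" using insert.prems(1) i_Intersect[OF _ insert.hyps(2)] by auto
  moreover have "I \<cdot> \<Inter>S \<subseteq> P" using ideal_prod_inter[OF calculation] insert.prems(2) by auto
  ultimately have "I \<subseteq> P \<or> \<Inter>S \<subseteq> P" using primeideal_divides_ideal_prod[OF P] by blast
  then show ?case using insert.IH insert.prems(1) by blast
qed

lemma (in cring) cgenideal_pow_Suc_subset:
  assumes x: "x \<in> carrier R"
  shows "PIdl (x [^] Suc n) \<subseteq> PIdl (x [^] n)"
proof (rule cgenideal_minimal[OF cgenideal_ideal[OF nat_pow_closed[OF x]]])
  show "x [^] Suc n \<in> PIdl (x [^] n)"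
    using x by (auto simp: cgenideal_def m_comm)
qed

lemma (in cring) mem_ideal_of_pow_mult_mem_cgenideal:
  assumes P: "primeideal P R" and Q: "ideal Q R" "P \<subseteq> Q" and x: "x \<in> Q" "x \<notin> P"
    and y: "y \<in> carrier R" and xy: "x [^] m \<otimes> y \<in> PIdl (x [^] Suc m)"
  shows "y \<in> Q"
proof -
  have xc: "x \<in> carrier R" using ideal.Icarr[OF Q(1) x(1)] .
  obtain r where r: "r \<in> carrier R" "x [^] m \<otimes> y = r \<otimes> (x [^] m \<otimes> x)"
    using xy unfolding cgenideal_def by auto
  have "x [^] m \<otimes> (y \<ominus> x \<otimes> r) = x [^] m \<otimes> y \<ominus> r \<otimes> (x [^] m \<otimes> x)"
    using r(1) xc y nat_pow_closed[OF xc, of m] by algebra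
  also have "\<dots> = \<zero>" using r xc nat_pow_closed[OF xc, of m] by (simp add: minus_eq r_neg)
  finally have "x [^] m \<otimes> (y \<ominus> x \<otimes> r) \<in> P"
    using additive_subgroup.zero_closed[OF ideal.axioms(1)[OF primeideal.axioms(1)[OF P]]] by simp
  then have "y \<ominus> x \<otimes> r \<in> P"
    using primeideal.I_prime[OF P nat_pow_closed[OF xc] minus_closed[OF y m_closed[OF xc r(1)]]]
      pow_notin_primeideal[OF P xc x(2)] by auto
  then have "y \<ominus> x \<otimes> r \<in> Q" using Q(2) by auto
  moreover have "x \<otimes> r \<in> Q" using ideal.I_r_closed[OF Q(1) x(1) r(1)] .
  ultimately have "y \<ominus> x \<otimes> r \<oplus> x \<otimes> r \<in> Q"
    using additive_subgroup.a_closed[OF ideal.axioms(1)[OF Q(1)]] by blast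
  moreover have "y \<ominus> x \<otimes> r \<oplus> x \<otimes> r = y" using xc y r(1) by algebra
  ultimately show "y \<in> Q" by simp
qed

lemma totally_artinianD:
  assumes "totally_artinian R F" "\<And>n. ideal (a n) R" "\<And>n. a (Suc n) \<subseteq> a n"
  obtains h m where "h \<in> F" "\<And>s. m \<le> s \<Longrightarrow> a m \<cdot>\<^bsub>R\<^esub> h \<subseteq> a s"
  using assms unfolding totally_artinian_def by blast

lemma totally_artinian_mono:
  assumes "totally_artinian R F" "F \<subseteq> G"
  shows "totally_artinian R G"
  using assms unfolding totally_artinian_def by blast

lemma gabriel_filter_subset_loc_filter:
  assumes "gabriel_filter R F" "p \<in> K_set R F"
  shows "F \<subseteq> loc_filter R p"
  using assms gabriel_filter_ideal gabriel_filter_not_subset_K unfolding loc_filter_def by blast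

lemma (in cring) totally_artinian_prime_subset_K_eq:
  assumes gf: "gabriel_filter R F" and TA: "totally_artinian R F"
    and pP: "primeideal p R" and q: "q \<in> K_set R F" and pq: "p \<subseteq> q"
  shows "q = p"
proof (rule ccontr)
  assume "q \<noteq> p"
  then obtain x where x: "x \<in> q" "x \<notin> p" using pq by blast
  have qI: "ideal q R" using q unfolding K_set_def by (auto dest: primeideal.axioms(1))
  have xc: "x \<in> carrier R" using ideal.Icarr[OF qI x(1)] .
  obtain h and m :: nat where h: "h \<in> F" "\<And>s. m \<le> s \<Longrightarrow> (PIdl (x [^] m)) \<cdot> h \<subseteq> PIdl (x [^] s)"
    by (rule totally_artinianD[where a = "\<lambda>n. PIdl (x [^] n)", OF TA
        cgenideal_ideal[OF nat_pow_closed[OF xc]] cgenideal_pow_Suc_subset[OF xc]]) blast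
  obtain y where y: "y \<in> h" "y \<notin> q" using gabriel_filter_not_subset_K[OF gf h(1) q] by blast
  have yc: "y \<in> carrier R" using ideal.Icarr[OF gabriel_filter_ideal[OF gf h(1)] y(1)] .
  have "x [^] m \<otimes> y \<in> (PIdl (x [^] m)) \<cdot> h"
    using ideal_prod.prod[OF cgenideal_self[OF nat_pow_closed[OF xc]] y(1)] .
  then have "x [^] m \<otimes> y \<in> PIdl (x [^] Suc m)" using h(2)[of "Suc m"] by auto
  then have "y \<in> q" by (rule mem_ideal_of_pow_mult_mem_cgenideal[OF pP qI pq x yc])
  then show False using y(2) by contradiction
qed

lemma (in cring) totally_artinian_K_eq_C:
  assumes "gabriel_filter R F" and "totally_artinian R F"
  shows "K_set R F = C_set R F"
  using totally_artinian_prime_subset_K_eq[OF assms] unfolding C_set_def K_set_def by auto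

lemma (in cring) totally_artinian_finite_C:
  assumes gf: "gabriel_filter R F" and TA: "totally_artinian R F"
  shows "finite (C_set R F)"
proof (rule ccontr)
  assume "infinite (C_set R F)"
  then obtain f :: "nat \<Rightarrow> 'a set" where f: "inj f" "range f \<subseteq> C_set R F"
    using infinite_countable_subset by blast
  have fK: "f i \<in> K_set R F" for i using f(2) unfolding C_set_def by blast
  then have fP: "primeideal (f i) R" and fI: "ideal (f i) R" for i
    unfolding K_set_def by (auto dest: primeideal.axioms(1))
  define a where "a n = \<Inter>(f ` {..n})" for n
  have ai: "ideal (a n) R" for n unfolding a_def by (rule i_Intersect) (auto intro: fI)
  have ad: "a (Suc n) \<subseteq> a n" for n unfolding a_def by auto
  obtain h m where h: "h \<in> F" "\<And>s. m \<le> s \<Longrightarrow> a m \<cdot> h \<subseteq> a s"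
    by (rule totally_artinianD[where a = a, OF TA ai ad]) blast
  have "a m \<cdot> h \<subseteq> f (Suc m)" using h(2)[of "Suc m"] unfolding a_def by auto
  then have "a m \<subseteq> f (Suc m)"
    using primeideal_divides_ideal_prod[OF fP ai gabriel_filter_ideal[OF gf h(1)]]
      gabriel_filter_not_subset_K[OF gf h(1) fK[of "Suc m"]] by blast
  then obtain i where i: "i \<le> m" "f i \<subseteq> f (Suc m)"
    using primeideal_Inter_subset[OF fP[of "Suc m"], of "f ` {..m}"] fI unfolding a_def by auto
  then have "f (Suc m) = f i" using f(2) fK[of "Suc m"] unfolding C_set_def by blast
  then have "Suc m = i" using f(1) by (simp add: inj_eq)
  then show False using i(1) by simp
qed

lemma (in cring) totally_artinian_of_local:
  assumes gf: "gabriel_filter R F" and ft: "finite_type R F" and fin: "finite (K_set R F)"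
    and loc: "\<And>p. p \<in> K_set R F \<Longrightarrow> totally_artinian R (loc_filter R p)"
  shows "totally_artinian R F"
  unfolding totally_artinian_def
proof (intro allI impI, elim conjE)
  fix a :: "nat \<Rightarrow> 'a set" assume "\<forall>n. ideal (a n) R" "\<forall>n. a (Suc n) \<subseteq> a n"
  then have ai: "\<And>n. ideal (a n) R" and ad: "\<And>n. a (Suc n) \<subseteq> a n" by auto
  have "\<exists>h m. h \<in> loc_filter R p \<and> (\<forall>s\<ge>m. a m \<cdot> h \<subseteq> a s)" if "p \<in> K_set R F" for p
    by (rule totally_artinianD[where a = a, OF loc[OF that] ai ad]) blast
  then obtain H M where H: "\<And>p. p \<in> K_set R F \<Longrightarrow> H p \<in> loc_filter R p"
    and M: "\<And>p s. p \<in> K_set R F \<Longrightarrow> M p \<le> s \<Longrightarrow> a (M p) \<cdot> H p \<subseteq> a s"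
    by metis
  define m where "m = Max (insert 0 (M ` K_set R F))"
  have Mm: "M p \<le> m" if "p \<in> K_set R F" for p unfolding m_def using fin that by auto
  define h where "h = (\<Inter>s\<in>{m..}. ideal_quotient R (a s) (a m))"
  have "ideal (ideal_quotient R (a s) (a m)) R" for s
    using ideal_quotient_ideal[OF ai] ideal.Icarr[OF ai] by blast
  then have hI: "ideal h R" unfolding h_def by (intro i_Intersect) auto
  have prod: "a m \<cdot> h \<subseteq> a s" if "m \<le> s" for s
    using ideal_prod_subset_iff[OF ai hI ai] that unfolding h_def by blast
  have "H p \<subseteq> h" if p: "p \<in> K_set R F" for p
  proof -
    have HI: "ideal (H p) R" using H[OF p] unfolding loc_filter_def by blast
    have "H p \<subseteq> ideal_quotient R (a s) (a m)" if "m \<le> s" for s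
    proof -
      have "H p \<subseteq> ideal_quotient R (a s) (a (M p))"
        using ideal_prod_subset_iff[OF ai HI ai] M[OF p] Mm[OF p] that by auto
      also have "\<dots> \<subseteq> ideal_quotient R (a s) (a m)"
        using ideal_quotient_antimono lift_Suc_antimono_le[of a, OF ad Mm[OF p]] .
      finally show ?thesis .
    qed
    then show ?thesis unfolding h_def by blast
  qed
  then have "h \<in> F"
    unfolding gabriel_filter_mem_iff[OF gf ft hI] using H unfolding loc_filter_def by blast
  then show "\<exists>m. \<exists>h\<in>F. \<forall>s\<ge>m. a m \<cdot> h \<subseteq> a s" using prod by blast
qed

theorem mainTheorem17:
  fixes R :: "('a, 'b) ring_scheme" and F :: "'a set set"
  assumes "cring R"
    and "gabriel_filter R F"
    and "finite_type R F"
  shows "totally_artinian R F \<longleftrightarrow>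
           (K_set R F = C_set R F \<and> finite (C_set R F) \<and>
            (\<forall>p\<in>C_set R F. totally_artinian R (loc_filter R p)))"
proof
  assume TA: "totally_artinian R F"
  have KC: "K_set R F = C_set R F" by (rule cring.totally_artinian_K_eq_C[OF assms(1,2) TA])
  moreover have "finite (C_set R F)" by (rule cring.totally_artinian_finite_C[OF assms(1,2) TA])
  moreover have "totally_artinian R (loc_filter R p)" if "p \<in> K_set R F" for p
    using totally_artinian_mono[OF TA gabriel_filter_subset_loc_filter[OF assms(2) that]] .
  ultimately show "K_set R F = C_set R F \<and> finite (C_set R F) \<and>
      (\<forall>p\<in>C_set R F. totally_artinian R (loc_filter R p))" by simp
next
  assume "K_set R F = C_set R F \<and> finite (C_set R F) \<and>
      (\<forall>p\<in>C_set R F. totally_artinian R (loc_filter R p))"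
  then show "totally_artinian R F"
    using cring.totally_artinian_of_local[OF assms] by simp
qed

end
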